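(* Let $p$ be a full-support skill distribution, and let $q_I,q_J$ be full-support perceptions. Let $\langle S_I,\pi_I\rangle$ and $\langle S_J,\pi_J\rangle$ be signal structures. Assume: - $\langle S_I,\pi_I\rangle$ is MLR; - $p\succsim_{LR}q_J$; - $q_I\succsim_{LR}q_J$; - $\langle S_I,\pi_I\rangle\succsim_G\langle S_J,\pi_J\rangle$. Then for every monotone firm $A\subset\mathcal{A}_M$, $$W_A(p,q_I,\langle S_I,\pi_I\rangle)\ \ge\ W_A(p,q_J,\langle S_J,\pi_J\rangle).$$
   Context: Let $\Theta\subset\mathbb{R}$ be a finite set of skill types with $|\Theta|\ge2$. Tasks are vectors $a\in\mathcal{A}:=\mathbb{R}^\Theta$. A firm is a non-empty finite set $A\subset\mathcal{A}$. It is monotone if $A\subset\mathcal{A}_M:=\{a: a(\theta')>a(\theta)\text{ whenever }\theta'>\theta\}$. A signal structure $\langle S,\pi\rangle$ consists of a non-empty finite set $S$ and a map $\pi:S\times\Theta\to[0,1]$ with $\sum_s\pi(s|\theta)=1$, such that each $s$ has $\pi(s|\theta)>0$ for some $\theta$. Pay: - $p,q\in\Delta(\Theta)$ have full support. - $q_{\langle S,\pi\rangle}(\theta|s):=q(\theta)\pi(s|\theta)/\sum_{\theta'}q(\theta')\pi(s|\theta')$. - $w_A(s,q,\langle S,\pi\rangle):=\max_{a\in A}\sum_\theta q_{\langle S,\pi\rangle}(\theta|s)a(\theta)$. - $W_A(p,q,\langle S,\pi\rangle):=\sum_\theta p(\theta)\sum_s\pi(s|\theta)w_A(s,q,\langle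 S,\pi\rangle)$. Orders: - $q'\succsim_{LR}q$ means $q(\theta)q'(\theta')\ge q(\theta')q'(\theta)$ whenever $\theta'>\theta$. - $\langle S',\pi'\rangle\succsim_G\langle S,\pi\rangle$ means there exists $g:S\times S'\to[0,1]$ with $\sum_s g(s|s')=1$ for each $s'$ and $\pi(s|\theta)=\sum_{s'}g(s|s')\pi'(s'|\theta)$ for all $s,\theta$. - $\langle S,\pi\rangle$ is MLR if $S\subset\mathbb{R}$ and $\pi(s|\theta)\pi(s'|\theta')\ge\pi(s|\theta')\pi(s'|\theta)$ whenever $s'>s$, $\theta'>\theta$. *)

theory Defs
  imports Complex_Main
begin

text \<open>Skill types: a finite set Theta of reals. Tasks are functions real => real
(only their values on Theta matter). Distributions are functions Theta -> real.\<close>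

definition full_support_dist :: "real set \<Rightarrow> (real \<Rightarrow> real) \<Rightarrow> bool" where
  "full_support_dist Theta p \<longleftrightarrow> (\<forall>\<theta>\<in>Theta. p \<theta> > 0) \<and> (\<Sum>\<theta>\<in>Theta. p \<theta>) = 1"

definition signal_structure :: "real set \<Rightarrow> 's set \<Rightarrow> ('s \<Rightarrow> real \<Rightarrow> real) \<Rightarrow> bool" where
  "signal_structure Theta S \<pi> \<longleftrightarrow>
     finite S \<and> S \<noteq> {} \<and>
     (\<forall>s\<in>S. \<forall>\<theta>\<in>Theta. 0 \<le> \<pi> s \<theta> \<and> \<pi> s \<theta> \<le> 1) \<and>
     (\<forall>\<theta>\<in>Theta. (\<Sum>s\<in>S. \<pi> s \<theta>) = 1) \<and>
     (\<forall>s\<in>S. \<exists>\<theta>\<in>Theta. \<pi> s \<theta> > 0)"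

definition monotone_firm :: "real set \<Rightarrow> (real \<Rightarrow> real) set \<Rightarrow> bool" where
  "monotone_firm Theta A \<longleftrightarrow> finite A \<and> A \<noteq> {} \<and>
     (\<forall>a\<in>A. \<forall>\<theta>\<in>Theta. \<forall>\<theta>'\<in>Theta. \<theta>' > \<theta> \<longrightarrow> a \<theta>' > a \<theta>)"

definition posterior :: "real set \<Rightarrow> (real \<Rightarrow> real) \<Rightarrow> ('s \<Rightarrow> real \<Rightarrow> real) \<Rightarrow> 's \<Rightarrow> real \<Rightarrow> real" where
  "posterior Theta q \<pi> s \<theta> = q \<theta> * \<pi> s \<theta> / (\<Sum>\<theta>'\<in>Theta. q \<theta>' * \<pi> s \<theta>')"

definition wage :: "real set \<Rightarrow> (real \<Rightarrow> real) set \<Rightarrow> 's \<Rightarrow> (real \<Rightarrow> real) \<Rightarrow> ('s \<Rightarrow> real \<Rightarrow> real) \<Rightarrow> real" where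
  "wage Theta A s q \<pi> = Max ((\<lambda>a. \<Sum>\<theta>\<in>Theta. posterior Theta q \<pi> s \<theta> * a \<theta>) ` A)"

definition total_wage :: "real set \<Rightarrow> (real \<Rightarrow> real) set \<Rightarrow> (real \<Rightarrow> real) \<Rightarrow> (real \<Rightarrow> real)
    \<Rightarrow> 's set \<Rightarrow> ('s \<Rightarrow> real \<Rightarrow> real) \<Rightarrow> real" where
  "total_wage Theta A p q S \<pi> = (\<Sum>\<theta>\<in>Theta. p \<theta> * (\<Sum>s\<in>S. \<pi> s \<theta> * wage Theta A s q \<pi>))"

text \<open>LR_ge Theta q' q means q' is LR-above q.\<close>
definition LR_ge :: "real set \<Rightarrow> (real \<Rightarrow> real) \<Rightarrow> (real \<Rightarrow> real) \<Rightarrow> bool" where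
  "LR_ge Theta q' q \<longleftrightarrow> (\<forall>\<theta>\<in>Theta. \<forall>\<theta>'\<in>Theta. \<theta>' > \<theta> \<longrightarrow> q \<theta> * q' \<theta>' \<ge> q \<theta>' * q' \<theta>)"

text \<open>Blackwell/garbling order: (S', pi') is more informative than (S, pi).\<close>
definition garbling_ge :: "real set \<Rightarrow> 't set \<Rightarrow> ('t \<Rightarrow> real \<Rightarrow> real) \<Rightarrow> 's set \<Rightarrow> ('s \<Rightarrow> real \<Rightarrow> real) \<Rightarrow> bool" where
  "garbling_ge Theta S' \<pi>' S \<pi> \<longleftrightarrow>
     (\<exists>g :: 's \<Rightarrow> 't \<Rightarrow> real.
        (\<forall>s\<in>S. \<forall>s'\<in>S'. 0 \<le> g s s' \<and> g s s' \<le> 1) \<and>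
        (\<forall>s'\<in>S'. (\<Sum>s\<in>S. g s s') = 1) \<and>
        (\<forall>s\<in>S. \<forall>\<theta>\<in>Theta. \<pi> s \<theta> = (\<Sum>s'\<in>S'. g s s' * \<pi>' s' \<theta>)))"

definition MLR :: "real set \<Rightarrow> real set \<Rightarrow> (real \<Rightarrow> real \<Rightarrow> real) \<Rightarrow> bool" where
  "MLR Theta S \<pi> \<longleftrightarrow> (\<forall>s\<in>S. \<forall>s'\<in>S. \<forall>\<theta>\<in>Theta. \<forall>\<theta>'\<in>Theta.
      s' > s \<and> \<theta>' > \<theta> \<longrightarrow> \<pi> s \<theta> * \<pi> s' \<theta>' \<ge> \<pi> s \<theta>' * \<pi> s' \<theta>)"

end

theory Submission
  imports Defs
begin

text \<open>
  Raising the perception from \<open>q\<^sub>J\<close> to an LR-higher \<open>q\<^sub>I\<close> shifts every posterior up in the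
  likelihood-ratio order, so the posterior mean of every increasing task, and hence every wage,
  rises. For the information part, a garbled signal \<open>s\<close> is a mixture of the MLR signals \<open>s'\<close>
  with weights \<open>g(s,s') q\<^sub>J(s')\<close>. Along \<open>s'\<close> both the perceived posterior mean of the task
  chosen at \<open>s\<close> and the ratio \<open>p(s')/q\<^sub>J(s')\<close> of true to perceived signal probability
  increase (by MLR and \<open>p \<succsim>\<^sub>L\<^sub>R q\<^sub>J\<close>), so Chebyshev's sum inequality bounds the true-probability
  weighted pay at \<open>s\<close> by the pay for the same task at the finer signals, and so by the wages there.
\<close>

lemma sum_LR_dominance:
  fixes u u' f :: "'a::linorder \<Rightarrow> real"
  assumes "finite T"
    and LR: "\<And>x y. x \<in> T \<Longrightarrow> y \<in> T \<Longrightarrow> x < y \<Longrightarrow> u y * u' x \<le> u x * u' y"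
    and "mono_on T f"
  shows "(\<Sum>x\<in>T. u' x) * (\<Sum>x\<in>T. u x * f x) \<le> (\<Sum>x\<in>T. u x) * (\<Sum>x\<in>T. u' x * f x)"
proof -
  let ?K = "\<lambda>x y. u x * u' y * (f y - f x)"
  have pair: "0 \<le> ?K x y + ?K y x" if "x \<in> T" "y \<in> T" for x y
  proof -
    have "?K x y + ?K y x = (u x * u' y - u y * u' x) * (f y - f x)" by algebra
    also have "\<dots> \<ge> 0"
      using LR[of x y] LR[of y x] mono_onD[OF \<open>mono_on T f\<close>, of x y] mono_onD[OF \<open>mono_on T f\<close>, of y x] that
      by (cases x y rule: linorder_cases) (auto intro: mult_nonneg_nonneg mult_nonpos_nonpos)
    finally show ?thesis .
  qed
  have "2 * (\<Sum>x\<in>T. \<Sum>y\<in>T. ?K x y) = (\<Sum>x\<in>T. \<Sum>y\<in>T. ?K x y + ?K y x)"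
    using sum.swap[of ?K T T] by (simp add: sum.distrib)
  also have "\<dots> \<ge> 0" using pair by (intro sum_nonneg) auto
  finally have "0 \<le> (\<Sum>x\<in>T. \<Sum>y\<in>T. ?K x y)" by simp
  also have "(\<Sum>x\<in>T. \<Sum>y\<in>T. ?K x y)
      = (\<Sum>x\<in>T. u x) * (\<Sum>x\<in>T. u' x * f x) - (\<Sum>x\<in>T. u' x) * (\<Sum>x\<in>T. u x * f x)"
    by (simp add: sum_product sum_subtractf algebra_simps sum.swap[of "\<lambda>x y. f x * (u x * u' y)"])
  finally show ?thesis by simp
qed

lemma chebyshev_sum_weighted:
  fixes b x y :: "'a::linorder \<Rightarrow> real"
  assumes "finite T" "\<And>i. i \<in> T \<Longrightarrow> 0 \<le> b i" "mono_on T x" "mono_on T y"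
  shows "(\<Sum>i\<in>T. b i * x i) * (\<Sum>i\<in>T. b i * y i) \<le> (\<Sum>i\<in>T. b i) * (\<Sum>i\<in>T. b i * x i * y i)"
proof -
  have "b j * (b i * x i) \<le> b i * (b j * x j)" if "i \<in> T" "j \<in> T" "i < j" for i j
    using assms(2)[OF that(1)] assms(2)[OF that(2)] mono_onD[OF assms(3) that(1,2)] that(3)
    by (simp add: mult_left_mono mult.left_commute)
  from sum_LR_dominance[OF assms(1) this assms(4)] show ?thesis by (simp add: mult.assoc)
qed

lemma LR_ge_refl: "LR_ge T u u"
  unfolding LR_ge_def by (simp add: mult.commute)

lemma LR_ge_mult:
  assumes "LR_ge T u' u" "LR_ge T v' v"
    and "\<And>x. x \<in> T \<Longrightarrow> 0 \<le> u x \<and> 0 \<le> u' x \<and> 0 \<le> v x \<and> 0 \<le> v' x"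
  shows "LR_ge T (\<lambda>x. u' x * v' x) (\<lambda>x. u x * v x)"
  unfolding LR_ge_def
proof (intro ballI impI)
  fix x y assume xy: "x \<in> T" "y \<in> T" "x < y"
  have "(u y * u' x) * (v y * v' x) \<le> (u x * u' y) * (v x * v' y)"
    using assms xy unfolding LR_ge_def by (intro mult_mono' [of "u y * u' x"]) auto
  then show "u y * v y * (u' x * v' x) \<le> u x * v x * (u' y * v' y)"
    by (simp add: mult_ac)
qed

lemma LR_ge_imp_mono_on_divide:
  assumes "LR_ge T p q" "\<And>x. x \<in> T \<Longrightarrow> 0 < q x"
  shows "mono_on T (\<lambda>x. p x / q x)"
proof (rule mono_onI)
  fix x y assume xy: "x \<in> T" "y \<in> T" "x \<le> y"
  show "p x / q x \<le> p y / q y"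
  proof (cases "x = y")
    case False
    then have "q y * p x \<le> q x * p y" using assms(1) xy unfolding LR_ge_def by auto
    then show ?thesis using assms(2)[OF xy(1)] assms(2)[OF xy(2)] by (simp add: divide_simps mult.commute)
  qed simp
qed

lemma MLR_imp_LR_ge:
  assumes "MLR Theta S \<pi>" "s \<in> S" "s' \<in> S" "s < s'"
  shows "LR_ge Theta (\<pi> s') (\<pi> s)"
  using assms unfolding MLR_def LR_ge_def by blast

lemma monotone_firm_mono_on:
  assumes "monotone_firm Theta A" "a \<in> A"
  shows "mono_on Theta a"
  using assms unfolding monotone_firm_def by (auto intro!: mono_onI simp: order_le_less)

lemma signal_structure_nonneg:
  "signal_structure Theta S \<pi> \<Longrightarrow> s \<in> S \<Longrightarrow> \<theta> \<in> Theta \<Longrightarrow> 0 \<le> \<pi> s \<theta>"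
  unfolding signal_structure_def by blast

lemma full_support_dist_pos:
  "full_support_dist Theta q \<Longrightarrow> \<theta> \<in> Theta \<Longrightarrow> 0 < q \<theta>"
  unfolding full_support_dist_def by blast

lemma signal_prob_pos:
  assumes "finite Theta" "signal_structure Theta S \<pi>" "full_support_dist Theta q" "s \<in> S"
  shows "0 < (\<Sum>\<theta>\<in>Theta. q \<theta> * \<pi> s \<theta>)"
proof -
  obtain t where "t \<in> Theta" "0 < \<pi> s t" using assms(2,4) unfolding signal_structure_def by blast
  with assms show ?thesis unfolding signal_structure_def full_support_dist_def
    by (intro sum_pos2[of Theta t]) (auto intro: mult_nonneg_nonneg less_imp_le)
qed

definition posterior_mean :: "real set \<Rightarrow> (real \<Rightarrow> real) \<Rightarrow> (real \<Rightarrow> real) \<Rightarrow> (real \<Rightarrow> real) \<Rightarrow> real" where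
  "posterior_mean Theta q l f = (\<Sum>\<theta>\<in>Theta. q \<theta> * l \<theta> * f \<theta>) / (\<Sum>\<theta>\<in>Theta. q \<theta> * l \<theta>)"

lemma wage_eq_Max_posterior_mean:
  "wage Theta A s q \<pi> = Max (posterior_mean Theta q (\<pi> s) ` A)"
  unfolding wage_def posterior_def posterior_mean_def by (simp add: sum_divide_distrib)

lemma posterior_mean_mono_LR:
  assumes "finite T" "LR_ge T (\<lambda>\<theta>. q' \<theta> * l' \<theta>) (\<lambda>\<theta>. q \<theta> * l \<theta>)" "mono_on T f"
    and "0 < (\<Sum>\<theta>\<in>T. q \<theta> * l \<theta>)" "0 < (\<Sum>\<theta>\<in>T. q' \<theta> * l' \<theta>)"
  shows "posterior_mean T q l f \<le> posterior_mean T q' l' f"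
proof -
  have "(\<Sum>\<theta>\<in>T. q' \<theta> * l' \<theta>) * (\<Sum>\<theta>\<in>T. q \<theta> * l \<theta> * f \<theta>)
      \<le> (\<Sum>\<theta>\<in>T. q \<theta> * l \<theta>) * (\<Sum>\<theta>\<in>T. q' \<theta> * l' \<theta> * f \<theta>)"
    using assms(2) unfolding LR_ge_def by (intro sum_LR_dominance[OF assms(1) _ assms(3)]) auto
  with assms(4,5) show ?thesis
    unfolding posterior_mean_def by (simp add: divide_simps mult.commute)
qed

lemma posterior_mean_mono_prior:
  assumes "finite Theta" "signal_structure Theta S \<pi>" "s \<in> S"
    and "full_support_dist Theta q" "full_support_dist Theta q'" "LR_ge Theta q' q" "mono_on Theta f"
  shows "posterior_mean Theta q (\<pi> s) f \<le> posterior_mean Theta q' (\<pi> s) f"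
proof (rule posterior_mean_mono_LR[OF assms(1) LR_ge_mult[OF assms(6) LR_ge_refl] assms(7)])
  show "0 \<le> q \<theta> \<and> 0 \<le> q' \<theta> \<and> 0 \<le> \<pi> s \<theta> \<and> 0 \<le> \<pi> s \<theta>" if "\<theta> \<in> Theta" for \<theta>
    using that assms(2-5) by (auto intro: less_imp_le full_support_dist_pos signal_structure_nonneg)
qed (use signal_prob_pos[OF assms(1,2)] assms(3-5) in auto)

lemma posterior_mean_mono_signal:
  assumes "finite Theta" "signal_structure Theta S \<pi>" "MLR Theta S \<pi>"
    and "full_support_dist Theta q" "mono_on Theta f"
  shows "mono_on S (\<lambda>s. posterior_mean Theta q (\<pi> s) f)"
proof (rule mono_onI)
  fix s s' assume s: "s \<in> S" "s' \<in> S" "s \<le> s'"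
  show "posterior_mean Theta q (\<pi> s) f \<le> posterior_mean Theta q (\<pi> s') f"
  proof (cases "s = s'")
    case False
    with s have "LR_ge Theta (\<pi> s') (\<pi> s)" using MLR_imp_LR_ge[OF assms(3)] by simp
    then show ?thesis
    proof (rule posterior_mean_mono_LR[OF assms(1) LR_ge_mult[OF LR_ge_refl] assms(5)])
      show "0 \<le> q \<theta> \<and> 0 \<le> q \<theta> \<and> 0 \<le> \<pi> s \<theta> \<and> 0 \<le> \<pi> s' \<theta>" if "\<theta> \<in> Theta" for \<theta>
        using that s assms(2,4) by (auto intro: less_imp_le full_support_dist_pos signal_structure_nonneg)
    qed (use signal_prob_pos[OF assms(1,2,4)] s in auto)
  qed simp
qed

lemma wage_mono_prior:
  assumes "finite Theta" "signal_structure Theta S \<pi>" "s \<in> S" "monotone_firm Theta A"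
    and "full_support_dist Theta q" "full_support_dist Theta q'" "LR_ge Theta q' q"
  shows "wage Theta A s q \<pi> \<le> wage Theta A s q' \<pi>"
proof -
  have "finite A" "A \<noteq> {}" using assms(4) unfolding monotone_firm_def by auto
  moreover have "posterior_mean Theta q (\<pi> s) a \<le> posterior_mean Theta q' (\<pi> s) a" if "a \<in> A" for a
    using posterior_mean_mono_prior[OF assms(1-3,5-7) monotone_firm_mono_on[OF assms(4) that]] .
  ultimately show ?thesis
    unfolding wage_eq_Max_posterior_mean by (auto intro: order_trans[OF _ Max_ge])
qed

lemma total_wage_mono_prior:
  assumes "finite Theta" "signal_structure Theta S \<pi>" "monotone_firm Theta A" "full_support_dist Theta p"
    and "full_support_dist Theta q" "full_support_dist Theta q'" "LR_ge Theta q' q"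
  shows "total_wage Theta A p q S \<pi> \<le> total_wage Theta A p q' S \<pi>"
  unfolding total_wage_def using assms
  by (intro sum_mono mult_left_mono wage_mono_prior)
    (auto intro: less_imp_le full_support_dist_pos signal_structure_nonneg sum_nonneg)

lemma sum_mult_mixture:
  fixes h :: "'a \<Rightarrow> real"
  assumes "\<And>\<theta>. \<theta> \<in> Theta \<Longrightarrow> \<rho> \<theta> = (\<Sum>s\<in>S. g s * \<pi> s \<theta>)"
  shows "(\<Sum>\<theta>\<in>Theta. h \<theta> * \<rho> \<theta>) = (\<Sum>s\<in>S. g s * (\<Sum>\<theta>\<in>Theta. h \<theta> * \<pi> s \<theta>))"
proof -
  have "(\<Sum>\<theta>\<in>Theta. h \<theta> * \<rho> \<theta>) = (\<Sum>\<theta>\<in>Theta. \<Sum>s\<in>S. g s * (h \<theta> * \<pi> s \<theta>))"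
    using assms by (simp add: sum_distrib_left mult.left_commute)
  also have "\<dots> = (\<Sum>s\<in>S. g s * (\<Sum>\<theta>\<in>Theta. h \<theta> * \<pi> s \<theta>))"
    by (subst sum.swap) (simp add: sum_distrib_left)
  finally show ?thesis .
qed

lemma posterior_mean_mixture_le:
  fixes \<pi> :: "real \<Rightarrow> real \<Rightarrow> real"
  assumes "finite Theta" "signal_structure Theta S \<pi>" "MLR Theta S \<pi>"
    and "full_support_dist Theta p" "full_support_dist Theta q" "LR_ge Theta p q" "mono_on Theta f"
    and g_nonneg: "\<And>s. s \<in> S \<Longrightarrow> 0 \<le> g s"
    and \<rho>: "\<And>\<theta>. \<theta> \<in> Theta \<Longrightarrow> \<rho> \<theta> = (\<Sum>s\<in>S. g s * \<pi> s \<theta>)"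
    and "0 < (\<Sum>\<theta>\<in>Theta. q \<theta> * \<rho> \<theta>)"
  shows "(\<Sum>\<theta>\<in>Theta. p \<theta> * \<rho> \<theta>) * posterior_mean Theta q \<rho> f
    \<le> (\<Sum>s\<in>S. g s * (\<Sum>\<theta>\<in>Theta. p \<theta> * \<pi> s \<theta>) * posterior_mean Theta q (\<pi> s) f)"
proof -
  define M where "M s = (\<Sum>\<theta>\<in>Theta. q \<theta> * \<pi> s \<theta>)" for s
  \<comment> \<open>\<open>M s * x s\<close> is the true probability of \<open>s\<close>, \<open>M s\<close> its perceived one\<close>
  define x where "x s = posterior_mean Theta q (\<pi> s) (\<lambda>\<theta>. p \<theta> / q \<theta>)" for s
  define y where "y s = posterior_mean Theta q (\<pi> s) f" for s
  have q_pos: "\<And>\<theta>. \<theta> \<in> Theta \<Longrightarrow> 0 < q \<theta>" using assms(5) by (rule full_support_dist_pos)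
  have M_pos: "0 < M s" if "s \<in> S" for s
    unfolding M_def using signal_prob_pos[OF assms(1,2,5) that] .
  have M_x: "M s * x s = (\<Sum>\<theta>\<in>Theta. p \<theta> * \<pi> s \<theta>)" if "s \<in> S" for s
    using M_pos[OF that] q_pos unfolding x_def M_def posterior_mean_def
    by (auto intro!: sum.cong simp: less_imp_neq[symmetric])
  have M_y: "M s * y s = (\<Sum>\<theta>\<in>Theta. q \<theta> * f \<theta> * \<pi> s \<theta>)" if "s \<in> S" for s
    using M_pos[OF that] unfolding y_def M_def posterior_mean_def by (simp add: mult_ac)
  have "finite S" using assms(2) unfolding signal_structure_def by blast
  have "(\<Sum>s\<in>S. g s * M s * x s) * (\<Sum>s\<in>S. g s * M s * y s)
      \<le> (\<Sum>s\<in>S. g s * M s) * (\<Sum>s\<in>S. g s * M s * x s * y s)"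
  proof (rule chebyshev_sum_weighted[OF \<open>finite S\<close>])
    show "mono_on S x" unfolding x_def
      using posterior_mean_mono_signal[OF assms(1-3,5) LR_ge_imp_mono_on_divide[OF assms(6) q_pos]] .
    show "mono_on S y" unfolding y_def using posterior_mean_mono_signal[OF assms(1-3,5,7)] .
  qed (simp add: g_nonneg M_pos less_imp_le)
  moreover have "(\<Sum>s\<in>S. g s * M s * x s) = (\<Sum>\<theta>\<in>Theta. p \<theta> * \<rho> \<theta>)"
    using M_x by (simp add: sum_mult_mixture[OF \<rho>] mult.assoc)
  moreover have "(\<Sum>s\<in>S. g s * M s * y s) = (\<Sum>\<theta>\<in>Theta. q \<theta> * \<rho> \<theta> * f \<theta>)"
  proof -
    have "(\<Sum>s\<in>S. g s * M s * y s) = (\<Sum>s\<in>S. g s * (\<Sum>\<theta>\<in>Theta. q \<theta> * f \<theta> * \<pi> s \<theta>))"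
      using M_y by (intro sum.cong) (simp_all add: mult.assoc)
    also have "\<dots> = (\<Sum>\<theta>\<in>Theta. q \<theta> * f \<theta> * \<rho> \<theta>)"
      by (rule sum_mult_mixture[OF \<rho>, symmetric])
    finally show ?thesis by (simp add: mult_ac)
  qed
  moreover have "(\<Sum>s\<in>S. g s * M s) = (\<Sum>\<theta>\<in>Theta. q \<theta> * \<rho> \<theta>)"
    unfolding M_def by (simp add: sum_mult_mixture[OF \<rho>])
  moreover have "(\<Sum>s\<in>S. g s * M s * x s * y s)
      = (\<Sum>s\<in>S. g s * (\<Sum>\<theta>\<in>Theta. p \<theta> * \<pi> s \<theta>) * posterior_mean Theta q (\<pi> s) f)"
    using M_x unfolding y_def by (simp add: mult.assoc)
  ultimately show ?thesis
    using assms(10) unfolding posterior_mean_def by (simp add: divide_simps mult.commute)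
qed

lemma total_wage_eq_sum_signals:
  "total_wage Theta A p q S \<pi> = (\<Sum>s\<in>S. (\<Sum>\<theta>\<in>Theta. p \<theta> * \<pi> s \<theta>) * wage Theta A s q \<pi>)"
  unfolding total_wage_def sum_distrib_left sum_distrib_right
  by (subst sum.swap) (simp add: mult.assoc)

lemma total_wage_mono_garbling:
  fixes SI :: "real set" and piI :: "real \<Rightarrow> real \<Rightarrow> real"
  assumes "finite Theta" "signal_structure Theta SI piI" "signal_structure Theta SJ piJ" "MLR Theta SI piI"
    and "full_support_dist Theta p" "full_support_dist Theta q" "LR_ge Theta p q"
    and "garbling_ge Theta SI piI SJ piJ" "monotone_firm Theta A"
  shows "total_wage Theta A p q SJ piJ \<le> total_wage Theta A p q SI piI"
proof -
  obtain g where g_nonneg: "\<forall>s\<in>SJ. \<forall>s'\<in>SI. 0 \<le> g s s' \<and> g s s' \<le> 1"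
    and g_sum: "\<forall>s'\<in>SI. (\<Sum>s\<in>SJ. g s s') = 1"
    and g_mix: "\<forall>s\<in>SJ. \<forall>\<theta>\<in>Theta. piJ s \<theta> = (\<Sum>s'\<in>SI. g s s' * piI s' \<theta>)"
    using assms(8) unfolding garbling_ge_def by blast
  have "finite A" "A \<noteq> {}" using assms(9) unfolding monotone_firm_def by auto
  define P where "P s' = (\<Sum>\<theta>\<in>Theta. p \<theta> * piI s' \<theta>)" for s'
  have P_nonneg: "0 \<le> P s'" if "s' \<in> SI" for s'
    unfolding P_def using that assms(2,5)
    by (auto intro!: sum_nonneg mult_nonneg_nonneg intro: less_imp_le full_support_dist_pos signal_structure_nonneg)
  have signal_le: "(\<Sum>\<theta>\<in>Theta. p \<theta> * piJ s \<theta>) * wage Theta A s q piJ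
      \<le> (\<Sum>s'\<in>SI. g s s' * (P s' * wage Theta A s' q piI))" if "s \<in> SJ" for s
  proof -
    have "wage Theta A s q piJ \<in> posterior_mean Theta q (piJ s) ` A"
      unfolding wage_eq_Max_posterior_mean using \<open>finite A\<close> \<open>A \<noteq> {}\<close> by (intro Max_in) auto
    then obtain a where "a \<in> A" and a_max: "wage Theta A s q piJ = posterior_mean Theta q (piJ s) a"
      by blast
    have "(\<Sum>\<theta>\<in>Theta. p \<theta> * piJ s \<theta>) * posterior_mean Theta q (piJ s) a
        \<le> (\<Sum>s'\<in>SI. g s s' * P s' * posterior_mean Theta q (piI s') a)"
      unfolding P_def
      using posterior_mean_mixture_le[OF assms(1,2,4-7) monotone_firm_mono_on[OF assms(9) \<open>a \<in> A\<close>]]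
        g_nonneg g_mix signal_prob_pos[OF assms(1,3,6) that] that by simp
    also have "\<dots> \<le> (\<Sum>s'\<in>SI. g s s' * (P s' * wage Theta A s' q piI))"
      unfolding wage_eq_Max_posterior_mean mult.assoc using \<open>finite A\<close> \<open>a \<in> A\<close> g_nonneg P_nonneg that
      by (intro sum_mono mult_left_mono) auto
    finally show ?thesis unfolding a_max .
  qed
  have "total_wage Theta A p q SJ piJ \<le> (\<Sum>s\<in>SJ. \<Sum>s'\<in>SI. g s s' * (P s' * wage Theta A s' q piI))"
    unfolding total_wage_eq_sum_signals using signal_le by (rule sum_mono)
  also have "\<dots> = (\<Sum>s'\<in>SI. P s' * wage Theta A s' q piI)"
    using g_sum by (subst sum.swap) (simp add: sum_distrib_right[symmetric])
  also have "\<dots> = total_wage Theta A p q SI piI"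
    unfolding total_wage_eq_sum_signals P_def ..
  finally show ?thesis .
qed

theorem corollary2:
  fixes Theta :: "real set" and p qI qJ :: "real \<Rightarrow> real"
    and SI :: "real set" and piI :: "real \<Rightarrow> real \<Rightarrow> real"
    and SJ :: "'b set" and piJ :: "'b \<Rightarrow> real \<Rightarrow> real"
    and A :: "(real \<Rightarrow> real) set"
  assumes "finite Theta" and "card Theta \<ge> 2"
    and "full_support_dist Theta p" and "full_support_dist Theta qI" and "full_support_dist Theta qJ"
    and "signal_structure Theta SI piI" and "signal_structure Theta SJ piJ"
    and "MLR Theta SI piI"
    and "LR_ge Theta p qJ"
    and "LR_ge Theta qI qJ"
    and "garbling_ge Theta SI piI SJ piJ"
    and "monotone_firm Theta A"
  shows "total_wage Theta A p qI SI piI \<ge> total_wage Theta A p qJ SJ piJ"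
proof -
  have "total_wage Theta A p qJ SJ piJ \<le> total_wage Theta A p qJ SI piI"
    using assms(1,6,7,8,3,5,9,11,12) by (rule total_wage_mono_garbling)
  also have "\<dots> \<le> total_wage Theta A p qI SI piI"
    using assms(1,6,12,3,5,4,10) by (rule total_wage_mono_prior)
  finally show ?thesis .
qed

end
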